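(* Let $0\le c<1$. For the best-worst rule $s=(c,4)$ there is a unique non-convergent Nash equilibrium (up to relabelling of candidates), namely $x=((x^1,2),(1-x^1,2))$ with $x^1=\frac{1}{4}(1+c)$. For the rule $s=(c,5)$ there is a unique non-convergent Nash equilibrium (up to relabelling of candidates), namely $x=((x^1,2),(1/2,1),(1-x^1,2))$ with $x^1=\frac16(1+2c)$.
   Context: Setting: voters' ideal points are distributed uniformly (unit mass, Lebesgue measure) on $[0,1]$. There are $m$ candidates; a profile is $x=(x_1,\dots,x_m)\in[0,1]^m$. A voter with ideal point $y$ ranks candidates by distance $|x_i-y|$ (closer is better); ties are broken by a fair lottery (uniformly random strict order among tied candidates). Under the best-worst rule $s=(c,m)$ ($c\ge0$), a candidate receives $1$ point from each voter ranking her first, $-c$ from each voter ranking her last ($m$-th), and $0$ otherwise; $v_i(x)$ is candidate $i$'s expected total points. A (pure-strategy Nash) equilibrium is a profile $x^*$ with $v_i(x^* )\ge v_i(t,x^*_{-i})$ for all $i$ and $t\in[0,1]$ ($(t,x_{-i})$ is $x$ with $x_i$ replaced by $t$); it is non-convergent (NCNE) if at least two platforms are distinct. Notation $x=((x^1,n_1),\dots,(x^q,n_q))$ lists the distinct occupied positions $x^1<\dots<x^q$ with $n_j$ candidates at $x^j$. *)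

theory Defs
  imports "HOL-Analysis.Analysis"
begin

text \<open>Candidates are indexed by 0..m-1; a profile is a function x :: nat => real,
  only the values x i for i < m matter. Voters are uniform on [0,1].\<close>

text \<open>Probability that a voter at y ranks candidate i first (fair lottery among
  the candidates at minimal distance).\<close>
definition first_share :: "nat \<Rightarrow> (nat \<Rightarrow> real) \<Rightarrow> nat \<Rightarrow> real \<Rightarrow> real" where
  "first_share m x i y =
     (let d = Min ((\<lambda>j. \<bar>x j - y\<bar>) ` {..<m});
          T = {j. j < m \<and> \<bar>x j - y\<bar> = d}
      in if i \<in> T then 1 / real (card T) else 0)"

definition last_share :: "nat \<Rightarrow> (nat \<Rightarrow> real) \<Rightarrow> nat \<Rightarrow> real \<Rightarrow> real" where
  "last_share m x i y =
     (let d = Max ((\<lambda>j. \<bar>x j - y\<bar>) ` {..<m});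
          T = {j. j < m \<and> \<bar>x j - y\<bar> = d}
      in if i \<in> T then 1 / real (card T) else 0)"

definition bw_score :: "real \<Rightarrow> nat \<Rightarrow> (nat \<Rightarrow> real) \<Rightarrow> nat \<Rightarrow> real" where
  "bw_score c m x i =
     integral {0..1} (\<lambda>y. first_share m x i y - c * last_share m x i y)"

definition is_profile :: "nat \<Rightarrow> (nat \<Rightarrow> real) \<Rightarrow> bool" where
  "is_profile m x \<longleftrightarrow> (\<forall>i<m. x i \<in> {0..1})"

definition is_equilibrium :: "real \<Rightarrow> nat \<Rightarrow> (nat \<Rightarrow> real) \<Rightarrow> bool" where
  "is_equilibrium c m x \<longleftrightarrow> is_profile m x \<and>
     (\<forall>i<m. \<forall>t\<in>{0..1}. bw_score c m (x(i := t)) i \<le> bw_score c m x i)"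

definition is_NCNE :: "real \<Rightarrow> nat \<Rightarrow> (nat \<Rightarrow> real) \<Rightarrow> bool" where
  "is_NCNE c m x \<longleftrightarrow> is_equilibrium c m x \<and> (\<exists>i<m. \<exists>j<m. x i \<noteq> x j)"

end

theory Submission
  imports Defs
begin

text \<open>Moving a candidate \<open>i\<close> to \<open>t\<close> gives it an explicit score: the length of the Voronoi cell
  of \<open>t\<close>, shared equally with the candidates already at \<open>t\<close>, minus \<open>c\<close> times the mass of voters
  beyond the midpoint of the two extreme positions when \<open>t\<close> is extreme. A lone extreme
  candidate gains by moving halfway towards its neighbour, so in a non-convergent equilibrium
  both extreme positions are shared; with four or five candidates this leaves the splits 2-2,
  3-2 and 2-1-2. Moving into a gap, and approaching a shared extreme position from outside,
  give linear inequalities; imposed at both ends (via the reflection \<open>y \<mapsto> 1 - y\<close>) they rule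
  out 3-2 and determine the positions. Conversely, for these profiles every deviation lands
  outside the extremes, on an occupied position or inside a gap, and each case is bounded by
  the current score.\<close>

section \<open>Scores as integrals\<close>

abbreviation count_at :: "nat \<Rightarrow> (nat \<Rightarrow> real) \<Rightarrow> real \<Rightarrow> nat" where
  "count_at m x v \<equiv> card {j. j < m \<and> x j = v}"

lemma integral_reflect_unit_interval:
  fixes f :: "real \<Rightarrow> real"
  shows "integral {0..1} (\<lambda>y. f (1 - y)) = integral {0..1} f"
proof -
  have "integral {0..1} (\<lambda>y. f (1 - y)) = integral {0..1} ((\<lambda>z. f (-z)) \<circ> ((+) (-1)))"
    by (simp add: o_def)
  also have "\<dots> = integral {-1..0} (\<lambda>z. f (-z))"
    by (subst integral_shift_Icc_real) simp
  also have "\<dots> = integral {0..1} f"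
    using Henstock_Kurzweil_Integration.integral_reflect_real[where a=0 and b=1 and f=f] by simp
  finally show ?thesis .
qed

lemma first_share_nearest:
  assumes "i < m" and nearest: "\<forall>j<m. x j \<noteq> x i \<longrightarrow> \<bar>x i - y\<bar> < \<bar>x j - y\<bar>"
  shows "first_share m x i y = 1 / count_at m x (x i)"
proof -
  have "Min ((\<lambda>j. \<bar>x j - y\<bar>) ` {..<m}) = \<bar>x i - y\<bar>"
    using assms by (subst Min_eq_iff) (auto simp: less_imp_le)
  moreover have "{j. j < m \<and> \<bar>x j - y\<bar> = \<bar>x i - y\<bar>} = {j. j < m \<and> x j = x i}"
    using nearest by force
  ultimately show ?thesis
    using \<open>i < m\<close> by (simp add: first_share_def)
qed

lemma first_share_not_nearest:
  assumes "j < m" and "\<bar>x j - y\<bar> < \<bar>x i - y\<bar>"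
  shows "first_share m x i y = 0"
proof -
  have "Min ((\<lambda>j. \<bar>x j - y\<bar>) ` {..<m}) \<le> \<bar>x j - y\<bar>"
    using assms by (intro Min_le) auto
  then have "\<bar>x i - y\<bar> \<noteq> Min ((\<lambda>j. \<bar>x j - y\<bar>) ` {..<m})"
    using assms by linarith
  then show ?thesis by (simp add: first_share_def Let_def)
qed

lemma last_share_farthest:
  assumes "i < m" and farthest: "\<forall>j<m. x j \<noteq> x i \<longrightarrow> \<bar>x j - y\<bar> < \<bar>x i - y\<bar>"
  shows "last_share m x i y = 1 / count_at m x (x i)"
proof -
  have "Max ((\<lambda>j. \<bar>x j - y\<bar>) ` {..<m}) = \<bar>x i - y\<bar>"
    using assms by (subst Max_eq_iff) (auto simp: less_imp_le)
  moreover have "{j. j < m \<and> \<bar>x j - y\<bar> = \<bar>x i - y\<bar>} = {j. j < m \<and> x j = x i}"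
    using farthest by force
  ultimately show ?thesis
    using \<open>i < m\<close> by (simp add: last_share_def)
qed

lemma last_share_not_farthest:
  assumes "j < m" and "\<bar>x i - y\<bar> < \<bar>x j - y\<bar>"
  shows "last_share m x i y = 0"
proof -
  have "\<bar>x j - y\<bar> \<le> Max ((\<lambda>j. \<bar>x j - y\<bar>) ` {..<m})"
    using assms by (intro Max_ge) auto
  then have "\<bar>x i - y\<bar> \<noteq> Max ((\<lambda>j. \<bar>x j - y\<bar>) ` {..<m})"
    using assms by linarith
  then show ?thesis by (simp add: last_share_def Let_def)
qed

lemma has_integral_interval_step:
  fixes L R v :: real
  assumes "0 \<le> L" "L \<le> R" "R \<le> 1"
  shows "((\<lambda>y. if y \<in> {L..R} then v else 0) has_integral (R - L) * v) {0..1}"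
proof -
  have "((\<lambda>y. v) has_integral (R - L) * v) {L..R}"
    using has_integral_const_real[of v L R] assms by simp
  then have "((\<lambda>y. if y \<in> cbox L R then v else 0) has_integral (R - L) * v) (cbox 0 1)"
    by (intro has_integral_restrict_closed_subinterval) (use assms in auto)
  then show ?thesis by simp
qed

text \<open>The voters ranking candidate \<open>i\<close> first form the Voronoi cell \<open>[L, R]\<close> of its position:
  \<open>L\<close> is the midpoint to the nearest position on the left (or \<open>0\<close> if there is none), and
  symmetrically for \<open>R\<close>.\<close>

lemma has_integral_first_share:
  assumes i: "i < m" and "0 \<le> L" "L \<le> x i" "x i \<le> R" "R \<le> 1"
    and left: "\<forall>j<m. x j < x i \<longrightarrow> x i + x j \<le> 2 * L"
    and left_attained: "L = 0 \<or> (\<exists>j<m. x j < x i \<and> x i + x j = 2 * L)"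
    and right: "\<forall>j<m. x i < x j \<longrightarrow> 2 * R \<le> x i + x j"
    and right_attained: "R = 1 \<or> (\<exists>j<m. x i < x j \<and> x i + x j = 2 * R)"
  shows "(first_share m x i has_integral (R - L) / count_at m x (x i)) {0..1}"
proof -
  let ?n = "real (count_at m x (x i))"
  have step: "((\<lambda>y. if y \<in> {L..R} then 1 / ?n else 0) has_integral (R - L) / ?n) {0..1}"
    using has_integral_interval_step[of L R "1 / ?n"] assms by simp
  show ?thesis
  proof (rule has_integral_spike_finite[OF _ _ step])
    fix y assume y: "y \<in> {0..1} - {L, R}"
    show "first_share m x i y = (if y \<in> {L..R} then 1 / ?n else 0)"
    proof (cases "L < y \<and> y < R")
      case True
      have "\<bar>x i - y\<bar> < \<bar>x j - y\<bar>" if "j < m" "x j \<noteq> x i" for j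
        using that left right True by (cases "x j < x i") (fastforce simp: abs_if)+
      then show ?thesis using True i by (simp add: first_share_nearest)
    next
      case False
      then have "y < L \<or> R < y" using y by auto
      then obtain j where "j < m" "\<bar>x j - y\<bar> < \<bar>x i - y\<bar>"
        using left_attained right_attained y by (smt (verit, best) atLeastAtMost_iff DiffE)
      then show ?thesis using False y by (auto simp: first_share_not_nearest)
    qed
  qed simp
qed

text \<open>Voters left of the midpoint of the extreme positions \<open>A < B\<close> rank the candidates at \<open>B\<close>
  last, those right of it the candidates at \<open>A\<close>.\<close>

definition last_place_mass :: "real \<Rightarrow> real \<Rightarrow> real \<Rightarrow> real" where
  "last_place_mass A B t = (if t = A then 1 - (A + B) / 2 else if t = B then (A + B) / 2 else 0)"

lemma last_share_left_of_midpoint: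
  assumes i: "i < m" and range: "\<forall>j<m. A \<le> x j \<and> x j \<le> B" and jB: "jB < m" "x jB = B"
    and "A < B" and y: "2 * y < A + B"
  shows "last_share m x i y = (if x i = B then 1 / count_at m x B else 0)"
proof -
  have farther: "\<bar>x j - y\<bar> < \<bar>B - y\<bar>" if "j < m" "x j \<noteq> B" for j
    using range that y by (force simp: abs_if)
  show ?thesis
  proof (cases "x i = B")
    case True
    then show ?thesis using farther i by (simp add: last_share_farthest)
  next
    case False
    then show ?thesis using farther[OF i] jB by (simp add: last_share_not_farthest)
  qed
qed

lemma last_share_reflect:
  "last_share m (\<lambda>j. 1 - x j) i (1 - y) = last_share m x i y"
proof -
  have "\<bar>(1 - x j) - (1 - y)\<bar> = \<bar>x j - y\<bar>" for j by (simp add: abs_minus_commute)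
  then show ?thesis unfolding last_share_def by presburger
qed

lemma last_share_right_of_midpoint:
  assumes i: "i < m" and range: "\<forall>j<m. A \<le> x j \<and> x j \<le> B" and jA: "jA < m" "x jA = A"
    and "A < B" and y: "A + B < 2 * y"
  shows "last_share m x i y = (if x i = A then 1 / count_at m x A else 0)"
proof -
  have "last_share m (\<lambda>j. 1 - x j) i (1 - y) =
      (if 1 - x i = 1 - A then 1 / count_at m (\<lambda>j. 1 - x j) (1 - A) else 0)"
    by (rule last_share_left_of_midpoint[OF i _ jA(1), where A="1 - B"]) (use assms in auto)
  then show ?thesis by (simp add: last_share_reflect)
qed

lemma has_integral_last_share:
  assumes i: "i < m" and range: "\<forall>j<m. A \<le> x j \<and> x j \<le> B"
    and A: "\<exists>j<m. x j = A" and B: "\<exists>j<m. x j = B" and "A < B" "0 \<le> A" "B \<le> 1"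
  shows "(last_share m x i has_integral last_place_mass A B (x i) / count_at m x (x i)) {0..1}"
proof -
  obtain jA jB where jA: "jA < m" "x jA = A" and jB: "jB < m" "x jB = B"
    using A B by blast
  define M where "M = (A + B) / 2"
  define \<alpha> where "\<alpha> = (if x i = A then 1 / real (count_at m x A) else 0)"
  define \<beta> where "\<beta> = (if x i = B then 1 / real (count_at m x B) else 0)"
  have mass: "last_place_mass A B (x i) = (if x i = A then 1 - M else if x i = B then M else 0)"
    by (simp add: last_place_mass_def M_def)
  have step: "((\<lambda>y. (if y \<in> {0..M} then \<beta> else 0) + (if y \<in> {M..1} then \<alpha> else 0))
      has_integral (M - 0) * \<beta> + (1 - M) * \<alpha>) {0..1}"
    by (intro has_integral_add has_integral_interval_step) (use assms in \<open>auto simp: M_def\<close>)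
  have "(M - 0) * \<beta> + (1 - M) * \<alpha> = last_place_mass A B (x i) / count_at m x (x i)"
    using \<open>A < B\<close> by (simp add: mass \<alpha>_def \<beta>_def)
  moreover have "(last_share m x i has_integral (M - 0) * \<beta> + (1 - M) * \<alpha>) {0..1}"
  proof (rule has_integral_spike_finite[OF _ _ step])
    fix y assume "y \<in> {0..1} - {M}"
    then show "last_share m x i y =
        (if y \<in> {0..M} then \<beta> else 0) + (if y \<in> {M..1} then \<alpha> else 0)"
      using last_share_left_of_midpoint[OF i range jB \<open>A < B\<close>, of y]
        last_share_right_of_midpoint[OF i range jA \<open>A < B\<close>, of y]
      by (auto simp: M_def \<alpha>_def \<beta>_def)
  qed simp
  ultimately show ?thesis by simp
qed

lemma bw_score_eq:
  assumes i: "i < m" and "0 \<le> L" "L \<le> x i" "x i \<le> R" "R \<le> 1"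
    and "\<forall>v\<in>x ` {..<m}. v < x i \<longrightarrow> x i + v \<le> 2 * L"
    and "L = 0 \<or> (\<exists>v\<in>x ` {..<m}. v < x i \<and> x i + v = 2 * L)"
    and "\<forall>v\<in>x ` {..<m}. x i < v \<longrightarrow> 2 * R \<le> x i + v"
    and "R = 1 \<or> (\<exists>v\<in>x ` {..<m}. x i < v \<and> x i + v = 2 * R)"
    and "\<forall>v\<in>x ` {..<m}. A \<le> v \<and> v \<le> B" "A \<in> x ` {..<m}" "B \<in> x ` {..<m}"
    and "A < B" "0 \<le> A" "B \<le> 1"
  shows "bw_score c m x i = (R - L - c * last_place_mass A B (x i)) / count_at m x (x i)"
proof -
  have "((\<lambda>y. first_share m x i y - c * last_share m x i y) has_integral
      (R - L) / count_at m x (x i) - c * (last_place_mass A B (x i) / count_at m x (x i))) {0..1}"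
    by (intro has_integral_diff has_integral_mult_right has_integral_first_share[OF i]
        has_integral_last_share[OF i]) (use assms in auto)
  then show ?thesis
    unfolding bw_score_def by (simp add: integral_unique diff_divide_distrib)
qed

section \<open>Unilateral deviations\<close>

abbreviation rivals_at :: "nat \<Rightarrow> (nat \<Rightarrow> real) \<Rightarrow> nat \<Rightarrow> real \<Rightarrow> nat" where
  "rivals_at m x i v \<equiv> card {j. j < m \<and> j \<noteq> i \<and> x j = v}"

lemma count_at_fun_upd:
  assumes "i < m"
  shows "count_at m (x(i := t)) t = rivals_at m x i t + 1"
proof -
  have "{j. j < m \<and> (x(i := t)) j = t} = insert i {j. j < m \<and> j \<noteq> i \<and> x j = t}"
    using assms by auto
  then show ?thesis by simp
qed

lemma image_fun_upd_lessThan: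
  assumes "i < m"
  shows "(x(i := t)) ` {..<m} = insert t (x ` ({..<m} - {i}))"
  using assms by auto

lemma bw_score_deviation:
  assumes i: "i < m" and others: "x ` ({..<m} - {i}) = S"
    and "0 \<le> L" "L \<le> t" "t \<le> R" "R \<le> 1"
    and "\<forall>v\<in>S. v < t \<longrightarrow> t + v \<le> 2 * L" and "L = 0 \<or> (\<exists>v\<in>S. v < t \<and> t + v = 2 * L)"
    and "\<forall>v\<in>S. t < v \<longrightarrow> 2 * R \<le> t + v" and "R = 1 \<or> (\<exists>v\<in>S. t < v \<and> t + v = 2 * R)"
    and "\<forall>v\<in>S. A \<le> v \<and> v \<le> B" "A \<le> t" "t \<le> B" "A = t \<or> A \<in> S" "B = t \<or> B \<in> S"
    and "A < B" "0 \<le> A" "B \<le> 1"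
  shows "bw_score c m (x(i := t)) i = (R - L - c * last_place_mass A B t) / (rivals_at m x i t + 1)"
proof -
  have "bw_score c m (x(i := t)) i =
      (R - L - c * last_place_mass A B ((x(i := t)) i)) / count_at m (x(i := t)) ((x(i := t)) i)"
    by (rule bw_score_eq[OF i])
      (use assms in \<open>simp_all add: image_fun_upd_lessThan[OF i] fun_upd_same del: fun_upd_apply\<close>)
  then show ?thesis by (simp only: fun_upd_same count_at_fun_upd[OF i])
qed

lemma first_share_reflect:
  "first_share m (\<lambda>j. 1 - x j) i (1 - y) = first_share m x i y"
proof -
  have "\<bar>(1 - x j) - (1 - y)\<bar> = \<bar>x j - y\<bar>" for j by (simp add: abs_minus_commute)
  then show ?thesis unfolding first_share_def by presburger
qed

lemma bw_score_reflect: "bw_score c m (\<lambda>j. 1 - x j) i = bw_score c m x i"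
  unfolding bw_score_def
  by (subst integral_reflect_unit_interval[symmetric]) (simp add: first_share_reflect last_share_reflect)

lemma bw_score_fun_upd_reflect:
  "bw_score c m ((\<lambda>j. 1 - x j)(i := 1 - t)) i = bw_score c m (x(i := t)) i"
proof -
  have "(\<lambda>j. 1 - x j)(i := 1 - t) = (\<lambda>j. 1 - (x(i := t)) j)" by auto
  then show ?thesis by (simp only: bw_score_reflect)
qed

lemma is_equilibrium_reflect:
  assumes "is_equilibrium c m x"
  shows "is_equilibrium c m (\<lambda>j. 1 - x j)"
  unfolding is_equilibrium_def
proof (intro conjI allI impI ballI)
  show "is_profile m (\<lambda>j. 1 - x j)"
    using assms by (auto simp: is_equilibrium_def is_profile_def)
  fix i t assume "i < m" "t \<in> {0..(1::real)}"
  then have "bw_score c m (x(i := 1 - t)) i \<le> bw_score c m x i"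
    using assms by (auto simp: is_equilibrium_def)
  then show "bw_score c m ((\<lambda>j. 1 - x j)(i := t)) i \<le> bw_score c m (\<lambda>j. 1 - x j) i"
    using bw_score_fun_upd_reflect[of c m x i "1 - t"] by (simp add: bw_score_reflect)
qed

lemma rivals_at_vacant:
  assumes "x ` ({..<m} - {i}) = S" "t \<notin> S"
  shows "rivals_at m x i t = 0"
  using assms by (auto simp: card_eq_0_iff)

lemma rivals_at_own_position:
  assumes "i < m"
  shows "rivals_at m x i (x i) + 1 = count_at m x (x i)"
  using count_at_fun_upd[OF assms, of x "x i"] by simp

lemma rivals_at_other_position:
  assumes "x i \<noteq> v"
  shows "rivals_at m x i v = count_at m x v"
  by (rule arg_cong[where f=card]) (use assms in auto)

lemma rivals_at_gt_0_iff: "0 < rivals_at m x i v \<longleftrightarrow> (\<exists>j<m. j \<noteq> i \<and> x j = v)"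
  by (auto simp: card_gt_0_iff)

lemma count_at_gt_0_iff: "0 < count_at m x v \<longleftrightarrow> (\<exists>j<m. x j = v)"
  by (auto simp: card_gt_0_iff)

lemma bw_score_at_leftmost:
  assumes i: "i < m" and others: "x ` ({..<m} - {i}) = S"
    and "0 \<le> t" "\<forall>v\<in>S. t \<le> v"
    and neighbour: "a \<in> S" "t < a" "\<forall>v\<in>S. t < v \<longrightarrow> a \<le> v"
    and rightmost: "B \<in> S" "\<forall>v\<in>S. v \<le> B" "B \<le> 1"
  shows "bw_score c m (x(i := t)) i = ((t + a) / 2 - c * (1 - (t + B) / 2)) / (rivals_at m x i t + 1)"
proof -
  have "t < B" using neighbour rightmost by force
  then have "bw_score c m (x(i := t)) i =
      ((t + a) / 2 - 0 - c * last_place_mass t B t) / (rivals_at m x i t + 1)"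
    by (intro bw_score_deviation[OF i others]) (use assms(3-) in auto)
  then show ?thesis by (simp add: last_place_mass_def)
qed

lemma bw_score_at_rightmost:
  assumes i: "i < m" and others: "x ` ({..<m} - {i}) = S"
    and "t \<le> 1" "\<forall>v\<in>S. v \<le> t"
    and neighbour: "a \<in> S" "a < t" "\<forall>v\<in>S. v < t \<longrightarrow> v \<le> a"
    and leftmost: "A \<in> S" "\<forall>v\<in>S. A \<le> v" "0 \<le> A"
  shows "bw_score c m (x(i := t)) i = (1 - (a + t) / 2 - c * ((A + t) / 2)) / (rivals_at m x i t + 1)"
proof -
  have "A < t" using neighbour leftmost by force
  then have "bw_score c m (x(i := t)) i =
      (1 - (a + t) / 2 - c * last_place_mass A t t) / (rivals_at m x i t + 1)"
    by (intro bw_score_deviation[OF i others]) (use assms(3-) in auto)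
  then show ?thesis using \<open>A < t\<close> by (simp add: last_place_mass_def)
qed

lemma bw_score_between:
  assumes i: "i < m" and others: "x ` ({..<m} - {i}) = S" and "finite S" "S \<subseteq> {0..1}"
    and neighbours: "a \<in> S" "b \<in> S" "a < t" "t < b" "\<forall>v\<in>S. v \<le> a \<or> v = t \<or> b \<le> v"
  shows "bw_score c m (x(i := t)) i = ((b - a) / 2) / (rivals_at m x i t + 1)"
proof -
  obtain A B where extremes: "A \<in> S" "B \<in> S" "\<forall>v\<in>S. A \<le> v \<and> v \<le> B"
  proof
    show "Min S \<in> S" "Max S \<in> S" "\<forall>v\<in>S. Min S \<le> v \<and> v \<le> Max S"
      using \<open>finite S\<close> neighbours(1) Min_in Max_in by auto
  qed
  have "A < t" "t < B"
    using extremes neighbours by force+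
  then have "bw_score c m (x(i := t)) i =
      ((t + b) / 2 - (a + t) / 2 - c * last_place_mass A B t) / (rivals_at m x i t + 1)"
    by (intro bw_score_deviation[OF i others]) (use assms(3-) extremes in \<open>auto simp: subset_eq\<close>)
  then show ?thesis
    using \<open>A < t\<close> \<open>t < B\<close> by (simp add: last_place_mass_def field_simps)
qed

lemma bw_score_in_gap:
  assumes i: "i < m" and others: "x ` ({..<m} - {i}) = S" and S: "finite S" "S \<subseteq> {0..1}"
    and gap: "a \<in> S" "b \<in> S" "a < t" "t < b" "\<forall>v\<in>S. v \<le> a \<or> b \<le> v"
  shows "bw_score c m (x(i := t)) i = (b - a) / 2"
proof -
  have vacant: "rivals_at m x i t = 0"
    using gap by (intro rivals_at_vacant[OF others]) force
  have "bw_score c m (x(i := t)) i = ((b - a) / 2) / (rivals_at m x i t + 1)"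
    by (rule bw_score_between[OF i others S gap(1-4)]) (use gap(5) in auto)
  then show ?thesis by (simp only: vacant) simp
qed

lemma bw_score_left_flank_le:
  assumes i: "i < m" and others: "x ` ({..<m} - {i}) = S" and "0 \<le> c"
    and "0 \<le> t" "t < a" and leftmost: "a \<in> S" "\<forall>v\<in>S. a \<le> v"
    and rightmost: "B \<in> S" "\<forall>v\<in>S. v \<le> B" "B \<le> 1"
  shows "bw_score c m (x(i := t)) i \<le> a - c * (1 - (a + B) / 2)"
proof -
  have vacant: "rivals_at m x i t = 0"
    using assms by (intro rivals_at_vacant[OF others]) force
  have "bw_score c m (x(i := t)) i = ((t + a) / 2 - c * (1 - (t + B) / 2)) / (rivals_at m x i t + 1)"
    by (rule bw_score_at_leftmost[OF i others]) (use assms(3-) in force)+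
  also have "\<dots> = a - c * (1 - (a + B) / 2) - (a - t) * (1 + c) / 2"
    by (simp only: vacant) (simp add: field_simps)
  also have "\<dots> \<le> a - c * (1 - (a + B) / 2)"
    using assms by simp
  finally show ?thesis .
qed

lemma bw_score_right_flank_le:
  assumes i: "i < m" and others: "x ` ({..<m} - {i}) = S" and "0 \<le> c"
    and "b < t" "t \<le> 1" and rightmost: "b \<in> S" "\<forall>v\<in>S. v \<le> b"
    and leftmost: "A \<in> S" "\<forall>v\<in>S. A \<le> v" "0 \<le> A"
  shows "bw_score c m (x(i := t)) i \<le> 1 - b - c * ((A + b) / 2)"
proof -
  have vacant: "rivals_at m x i t = 0"
    using assms by (intro rivals_at_vacant[OF others]) force
  have "bw_score c m (x(i := t)) i = (1 - (b + t) / 2 - c * ((A + t) / 2)) / (rivals_at m x i t + 1)"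
    by (rule bw_score_at_rightmost[OF i others]) (use assms(3-) in force)+
  also have "\<dots> = 1 - b - c * ((A + b) / 2) - (t - b) * (1 + c) / 2"
    by (simp only: vacant) (simp add: field_simps)
  also have "\<dots> \<le> 1 - b - c * ((A + b) / 2)"
    using assms by simp
  finally show ?thesis .
qed

lemma bw_score_shared_leftmost:
  assumes i: "i < m" and others: "x ` ({..<m} - {i}) = S"
    and "0 \<le> x i" "x i \<in> S" "\<forall>v\<in>S. x i \<le> v"
    and neighbour: "a \<in> S" "x i < a" "\<forall>v\<in>S. x i < v \<longrightarrow> a \<le> v"
    and rightmost: "B \<in> S" "\<forall>v\<in>S. v \<le> B" "B \<le> 1"
  shows "bw_score c m x i = ((x i + a) / 2 - c * (1 - (x i + B) / 2)) / count_at m x (x i)"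
proof -
  have "bw_score c m (x(i := x i)) i =
      ((x i + a) / 2 - c * (1 - (x i + B) / 2)) / (rivals_at m x i (x i) + 1)"
    by (rule bw_score_at_leftmost[OF i others]) (use assms(3-) in auto)
  then show ?thesis by (simp only: fun_upd_triv rivals_at_own_position[OF i] of_nat_add)
qed

section \<open>Necessary conditions for an equilibrium\<close>

lemma is_equilibriumD:
  assumes "is_equilibrium c m x" "i < m" "0 \<le> t" "t \<le> 1"
  shows "bw_score c m (x(i := t)) i \<le> bw_score c m x i"
  using assms by (simp add: is_equilibrium_def)

lemma is_equilibrium_position:
  assumes "is_equilibrium c m x" "j < m"
  shows "0 \<le> x j" "x j \<le> 1"
  using assms by (auto simp: is_equilibrium_def is_profile_def)

lemma equilibrium_gap_bound:
  assumes eq: "is_equilibrium c m x" and i: "i < m" and others: "x ` ({..<m} - {i}) = S"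
    and gap: "a \<in> S" "b \<in> S" "a < b" "\<forall>v\<in>S. v \<le> a \<or> b \<le> v"
  shows "(b - a) / 2 \<le> bw_score c m x i"
proof -
  have S: "finite S" "S \<subseteq> {0..1}"
    using others is_equilibrium_position[OF eq] by auto
  then have "bw_score c m (x(i := (a + b) / 2)) i = (b - a) / 2"
    using gap by (intro bw_score_in_gap[OF i others]) auto
  moreover have "0 \<le> (a + b) / 2" "(a + b) / 2 \<le> 1" using S gap by auto
  ultimately show ?thesis using is_equilibriumD[OF eq i, of "(a + b) / 2"] by simp
qed

text \<open>The bound is the limit of the scores of the deviations to \<open>t < x i\<close> as \<open>t \<rightarrow> x i\<close>.\<close>

lemma equilibrium_left_end_bound:
  assumes eq: "is_equilibrium c m x" and i: "i < m" and others: "x ` ({..<m} - {i}) = S"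
    and "0 < x i" and shared: "x i \<in> S" "\<forall>v\<in>S. x i \<le> v"
    and rightmost: "B \<in> S" "\<forall>v\<in>S. v \<le> B"
  shows "x i - c * (1 - (x i + B) / 2) \<le> bw_score c m x i"
proof (rule tendsto_upperbound)
  let ?f = "\<lambda>t. (t + x i) / 2 - c * (1 - (t + B) / 2)"
  show "(?f \<longlongrightarrow> x i - c * (1 - (x i + B) / 2)) (at_left (x i))"
    by (rule tendsto_eq_intros refl | simp)+
  have "B \<le> 1" using is_equilibrium_position[OF eq] others rightmost by auto
  have below: "?f t \<le> bw_score c m x i" if t: "t \<in> {0<..<x i}" for t
  proof -
    have vacant: "rivals_at m x i t = 0"
      using t shared by (intro rivals_at_vacant[OF others]) force
    have "bw_score c m (x(i := t)) i = ?f t / (rivals_at m x i t + 1)"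
      by (rule bw_score_at_leftmost[OF i others]) (use t shared rightmost \<open>B \<le> 1\<close> in auto)
    then have "bw_score c m (x(i := t)) i = ?f t"
      by (simp only: vacant) simp
    moreover have "x i \<le> 1" using shared \<open>B \<le> 1\<close> rightmost by force
    ultimately show ?thesis using is_equilibriumD[OF eq i, of t] t by simp
  qed
  show "\<forall>\<^sub>F t in at_left (x i). ?f t \<le> bw_score c m x i"
    using eventually_at_left_real[OF \<open>0 < x i\<close>] by (rule eventually_mono) (rule below)
qed simp

lemma equilibrium_leftmost_shared:
  assumes eq: "is_equilibrium c m x" and "0 \<le> c"
    and i: "i < m" "\<forall>j<m. x i \<le> x j" and not_all: "\<exists>j<m. x j \<noteq> x i"
  shows "\<exists>j<m. j \<noteq> i \<and> x j = x i"
proof (rule ccontr)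
  assume alone: "\<not> ?thesis"
  define S where "S = x ` ({..<m} - {i})"
  have S: "finite S" "S \<noteq> {}" "S \<subseteq> {0..1}"
    using not_all is_equilibrium_position[OF eq] by (auto simp: S_def)
  define a where "a = Min S"
  define B where "B = Max S"
  have extremes: "a \<in> S" "B \<in> S" "\<forall>v\<in>S. a \<le> v \<and> v \<le> B"
    using S by (auto simp: a_def B_def)
  have "x i < a"
    using \<open>a \<in> S\<close> alone i by (force simp: S_def order.order_iff_strict)
  have "0 \<le> x i" using is_equilibrium_position[OF eq i(1)] by simp
  have "bw_score c m (x(i := t)) i = (t + a) / 2 - c * (1 - (t + B) / 2)"
    if "x i \<le> t" "t < a" for t
  proof -
    have vacant: "rivals_at m x i t = 0"
      using that extremes by (intro rivals_at_vacant[OF S_def[symmetric]]) force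
    have "bw_score c m (x(i := t)) i =
        ((t + a) / 2 - c * (1 - (t + B) / 2)) / (rivals_at m x i t + 1)"
      by (rule bw_score_at_leftmost[OF i(1) S_def[symmetric]])
        (use that S extremes \<open>0 \<le> x i\<close> in auto)
    then show ?thesis by (simp only: vacant) simp
  qed
  note score = this[of "x i"] this[of "(x i + a) / 2"]
  have "bw_score c m (x(i := (x i + a) / 2)) i \<le> bw_score c m (x(i := x i)) i"
    using is_equilibriumD[OF eq i(1), of "(x i + a) / 2"] \<open>x i < a\<close> \<open>0 \<le> x i\<close> \<open>a \<in> S\<close> S
    by auto
  then have "(a - x i) * (1 + c) \<le> 0"
    using score \<open>x i < a\<close> by (simp add: field_simps)
  then show False
    using \<open>x i < a\<close> \<open>0 \<le> c\<close> by (simp add: mult_le_0_iff)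
qed

lemma two_le_count_at:
  assumes "i < m" "j < m" "i \<noteq> j" "x i = v" "x j = v"
  shows "2 \<le> count_at m x v"
proof -
  have "{i, j} \<subseteq> {k. k < m \<and> x k = v}" using assms by auto
  then have "card {i, j} \<le> count_at m x v" by (intro card_mono) auto
  with assms show ?thesis by simp
qed

lemma count_at_other_position:
  assumes "2 \<le> count_at m x v"
  shows "\<exists>j<m. j \<noteq> i \<and> x j = v"
proof (rule ccontr)
  assume "\<not> ?thesis"
  then have "{j. j < m \<and> x j = v} \<subseteq> {i}" by auto
  then have "count_at m x v \<le> 1" using card_mono[of "{i}"] by fastforce
  with assms show False by simp
qed

lemma NCNE_extremes:
  assumes "is_NCNE c m x" "0 \<le> c"
  obtains A B where "A < B" "\<forall>j<m. A \<le> x j \<and> x j \<le> B" "0 \<le> A" "B \<le> 1"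
    "2 \<le> count_at m x A" "2 \<le> count_at m x B"
proof -
  have eq: "is_equilibrium c m x" and not_all: "\<exists>i<m. \<exists>j<m. x i \<noteq> x j"
    using assms(1) by (auto simp: is_NCNE_def)
  define A where "A = Min (x ` {..<m})"
  define B where "B = Max (x ` {..<m})"
  have range: "\<forall>j<m. A \<le> x j \<and> x j \<le> B" unfolding A_def B_def by auto
  have "A \<in> x ` {..<m}" "B \<in> x ` {..<m}"
    using not_all unfolding A_def B_def by (auto intro!: Min_in Max_in)
  then obtain iA iB where iA: "iA < m" "x iA = A" and iB: "iB < m" "x iB = B"
    by (metis imageE lessThan_iff)
  have "A < B"
  proof -
    obtain i j where "i < m" "j < m" "x i \<noteq> x j" using not_all by blast
    with range have "A \<le> x i" "x i \<le> B" "A \<le> x j" "x j \<le> B" by auto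
    with \<open>x i \<noteq> x j\<close> show ?thesis by linarith
  qed
  have "\<forall>j<m. x iA \<le> x j" "\<exists>j<m. x j \<noteq> x iA"
    using range iA iB \<open>A < B\<close> by auto
  from equilibrium_leftmost_shared[OF eq assms(2) iA(1) this] iA(2)
  obtain jA where "jA < m" "jA \<noteq> iA" "x jA = A" by auto
  then have "2 \<le> count_at m x A" by (intro two_le_count_at[of iA m jA]) (use iA in auto)
  have "\<forall>j<m. 1 - x iB \<le> 1 - x j" "\<exists>j<m. 1 - x j \<noteq> 1 - x iB"
    using range iA iB \<open>A < B\<close> by auto
  from equilibrium_leftmost_shared[OF is_equilibrium_reflect[OF eq] assms(2) iB(1) this] iB(2)
  obtain jB where "jB < m" "jB \<noteq> iB" "x jB = B" by auto
  then have "2 \<le> count_at m x B" by (intro two_le_count_at[of iB m jB]) (use iB in auto)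
  show ?thesis
    by (rule that[OF \<open>A < B\<close> range _ _ \<open>2 \<le> count_at m x A\<close> \<open>2 \<le> count_at m x B\<close>])
      (use is_equilibrium_position[OF eq] iA iB in auto)
qed

lemma count_at_partition:
  assumes "A \<noteq> B"
  shows "count_at m x A + count_at m x B + card {j. j < m \<and> x j \<noteq> A \<and> x j \<noteq> B} = m"
proof -
  have "{..<m} = {j. j < m \<and> x j = A} \<union> {j. j < m \<and> x j = B} \<union> {j. j < m \<and> x j \<noteq> A \<and> x j \<noteq> B}"
    by auto
  then have "m = card ({j. j < m \<and> x j = A} \<union> {j. j < m \<and> x j = B} \<union>
      {j. j < m \<and> x j \<noteq> A \<and> x j \<noteq> B})"
    by (metis card_lessThan)
  also have "\<dots> = count_at m x A + count_at m x B + card {j. j < m \<and> x j \<noteq> A \<and> x j \<noteq> B}"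
    using assms by (subst card_Un_disjoint; auto simp: card_Un_disjoint)+
  finally show ?thesis by simp
qed

lemma all_positions_of_count_sum:
  assumes "finite V" "(\<Sum>v\<in>V. count_at m x v) = m"
  shows "\<forall>j<m. x j \<in> V"
proof -
  have "{j. j < m \<and> x j \<in> V} = (\<Union>v\<in>V. {j. j < m \<and> x j = v})" by auto
  moreover have "card (\<Union>v\<in>V. {j. j < m \<and> x j = v}) = (\<Sum>v\<in>V. count_at m x v)"
    using assms(1) by (intro card_UN_disjoint) auto
  ultimately have "card {j. j < m \<and> x j \<in> V} = card {..<m}" using assms(2) by simp
  then have "{j. j < m \<and> x j \<in> V} = {..<m}" by (intro card_subset_eq) auto
  then show ?thesis by auto
qed

lemma others_image_eq:
  assumes "i < m" "\<forall>j<m. j \<noteq> i \<longrightarrow> x j \<in> S" "\<forall>v\<in>S. \<exists>j<m. j \<noteq> i \<and> x j = v"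
  shows "x ` ({..<m} - {i}) = S"
  using assms by force

lemma count_at_reflect: "count_at m (\<lambda>j. 1 - x j) v = count_at m x (1 - v)"
  by (simp add: algebra_simps)

lemma two_cluster_necessary:
  assumes eq: "is_equilibrium c m x" and all: "\<forall>j<m. x j = p \<or> x j = r" and "p < r"
    and "2 \<le> count_at m x p" and "\<exists>j<m. x j = r"
  defines "V \<equiv> ((p + r) / 2 - c * (1 - (p + r) / 2)) / count_at m x p"
  shows "(r - p) / 2 \<le> V" "0 < p \<Longrightarrow> p - c * (1 - (p + r) / 2) \<le> V"
proof -
  obtain i where i: "i < m" "x i = p"
    using count_at_other_position[OF \<open>2 \<le> count_at m x p\<close>] by blast
  have "\<exists>j<m. j \<noteq> i \<and> x j = p" "\<exists>j<m. j \<noteq> i \<and> x j = r"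
    using count_at_other_position[OF \<open>2 \<le> count_at m x p\<close>] \<open>\<exists>j<m. x j = r\<close> i \<open>p < r\<close>
    by (blast, force)
  then have others: "x ` ({..<m} - {i}) = {p, r}"
    by (intro others_image_eq[OF i(1)]) (use all in auto)
  have "0 \<le> p" "r \<le> 1"
    using is_equilibrium_position[OF eq] i \<open>\<exists>j<m. x j = r\<close> by auto
  then have score: "bw_score c m x i = V"
    using bw_score_shared_leftmost[OF i(1) others, where a=r and B=r and c=c] i \<open>p < r\<close>
    by (auto simp: V_def)
  show "(r - p) / 2 \<le> V"
    using equilibrium_gap_bound[OF eq i(1) others, of p r] \<open>p < r\<close> score by auto
  show "p - c * (1 - (p + r) / 2) \<le> V" if "0 < p"
    using equilibrium_left_end_bound[OF eq i(1) others, where B=r] that i \<open>p < r\<close> score by auto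
qed

lemma three_cluster_necessary:
  assumes eq: "is_equilibrium c m x" and all: "\<forall>j<m. x j = p \<or> x j = q \<or> x j = r"
    and "p < q" "q < r" and "2 \<le> count_at m x p" and "\<exists>j<m. x j = q" "\<exists>j<m. x j = r"
  defines "V \<equiv> ((p + q) / 2 - c * (1 - (p + r) / 2)) / count_at m x p"
  shows "(q - p) / 2 \<le> V" "(r - q) / 2 \<le> V" "0 < p \<Longrightarrow> p - c * (1 - (p + r) / 2) \<le> V"
proof -
  obtain i where i: "i < m" "x i = p"
    using count_at_other_position[OF \<open>2 \<le> count_at m x p\<close>] by blast
  have "\<exists>j<m. j \<noteq> i \<and> x j = p" "\<exists>j<m. j \<noteq> i \<and> x j = q" "\<exists>j<m. j \<noteq> i \<and> x j = r"
    using count_at_other_position[OF \<open>2 \<le> count_at m x p\<close>] assms(6,7) i assms(3,4)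
    by (blast, force, force)
  then have others: "x ` ({..<m} - {i}) = {p, q, r}"
    by (intro others_image_eq[OF i(1)]) (use all in auto)
  have "0 \<le> p" "r \<le> 1"
    using is_equilibrium_position[OF eq] i \<open>\<exists>j<m. x j = r\<close> by auto
  then have score: "bw_score c m x i = V"
    using bw_score_shared_leftmost[OF i(1) others, where a=q and B=r and c=c] i assms(3,4)
    by (auto simp: V_def)
  show "(q - p) / 2 \<le> V"
    using equilibrium_gap_bound[OF eq i(1) others, of p q] assms(3,4) score by auto
  show "(r - q) / 2 \<le> V"
    using equilibrium_gap_bound[OF eq i(1) others, of q r] assms(3,4) score by auto
  show "p - c * (1 - (p + r) / 2) \<le> V" if "0 < p"
    using equilibrium_left_end_bound[OF eq i(1) others, where B=r] that i assms(3,4) score by auto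
qed

lemma deviation_bound_two_positions:
  assumes i: "i < m" and others: "x ` ({..<m} - {i}) = {p, r}"
    and "0 \<le> p" "p < r" "r \<le> 1" "0 \<le> c" "0 \<le> t" "t \<le> 1"
    and left_flank: "p - c * (1 - (p + r) / 2) \<le> V"
    and join_p: "((p + r) / 2 - c * (1 - (p + r) / 2)) / (rivals_at m x i p + 1) \<le> V"
    and gap: "(r - p) / 2 \<le> V"
    and join_r: "(1 - (p + r) / 2 - c * ((p + r) / 2)) / (rivals_at m x i r + 1) \<le> V"
    and right_flank: "1 - r - c * ((p + r) / 2) \<le> V"
  shows "bw_score c m (x(i := t)) i \<le> V"
proof -
  consider "t < p" | "t = p" | "p < t" "t < r" | "t = r" | "r < t" by linarith
  then show ?thesis
  proof cases
    case 1
    then show ?thesis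
      using bw_score_left_flank_le[OF i others, where t=t and a=p and B=r and c=c] assms by auto
  next
    case 2
    then show ?thesis
      using bw_score_at_leftmost[OF i others, where t=p and a=r and B=r and c=c] assms by auto
  next
    case 3
    then show ?thesis
      using bw_score_in_gap[OF i others, where a=p and b=r and t=t and c=c] assms by auto
  next
    case 4
    then show ?thesis
      using bw_score_at_rightmost[OF i others, where t=r and a=p and A=p and c=c] assms by auto
  next
    case 5
    then show ?thesis
      using bw_score_right_flank_le[OF i others, where b=r and t=t and A=p and c=c] assms by auto
  qed
qed

lemma deviation_bound_three_positions:
  assumes i: "i < m" and others: "x ` ({..<m} - {i}) = {p, q, r}"
    and "0 \<le> p" "p < q" "q < r" "r \<le> 1" "0 \<le> c" "0 \<le> t" "t \<le> 1"
    and left_flank: "p - c * (1 - (p + r) / 2) \<le> V"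
    and join_p: "((p + q) / 2 - c * (1 - (p + r) / 2)) / (rivals_at m x i p + 1) \<le> V"
    and gap_pq: "(q - p) / 2 \<le> V"
    and join_q: "((r - p) / 2) / (rivals_at m x i q + 1) \<le> V"
    and gap_qr: "(r - q) / 2 \<le> V"
    and join_r: "(1 - (q + r) / 2 - c * ((p + r) / 2)) / (rivals_at m x i r + 1) \<le> V"
    and right_flank: "1 - r - c * ((p + r) / 2) \<le> V"
  shows "bw_score c m (x(i := t)) i \<le> V"
proof -
  consider "t < p" | "t = p" | "p < t" "t < q" | "t = q" | "q < t" "t < r" | "t = r" | "r < t"
    by linarith
  then show ?thesis
  proof cases
    case 1
    then show ?thesis
      using bw_score_left_flank_le[OF i others, where t=t and a=p and B=r and c=c] assms by auto
  next
    case 2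
    then show ?thesis
      using bw_score_at_leftmost[OF i others, where t=p and a=q and B=r and c=c] assms by auto
  next
    case 3
    then show ?thesis
      using bw_score_in_gap[OF i others, where a=p and b=q and t=t and c=c] assms by auto
  next
    case 4
    then show ?thesis
      using bw_score_between[OF i others, where a=p and b=r and t=q and c=c] assms by auto
  next
    case 5
    then show ?thesis
      using bw_score_in_gap[OF i others, where a=q and b=r and t=t and c=c] assms by auto
  next
    case 6
    then show ?thesis
      using bw_score_at_rightmost[OF i others, where t=r and a=q and A=p and c=c] assms by auto
  next
    case 7
    then show ?thesis
      using bw_score_right_flank_le[OF i others, where b=r and t=t and A=p and c=c] assms by auto
  qed
qed

lemma equilibrium_by_reflection:
  assumes "P x"
    and reflect: "\<And>y. P y \<Longrightarrow> P (\<lambda>j. 1 - y j)"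
    and profile: "\<And>y. P y \<Longrightarrow> is_profile m y"
    and left_half: "\<And>y i t. P y \<Longrightarrow> i < m \<Longrightarrow> y i \<le> 1 / 2 \<Longrightarrow> 0 \<le> t \<Longrightarrow> t \<le> 1 \<Longrightarrow>
      bw_score c m (y(i := t)) i \<le> bw_score c m y i"
  shows "is_equilibrium c m x"
  unfolding is_equilibrium_def
proof (intro conjI allI impI ballI)
  show "is_profile m x" using profile \<open>P x\<close> .
  fix i t assume "i < m" "t \<in> {0..(1::real)}"
  show "bw_score c m (x(i := t)) i \<le> bw_score c m x i"
  proof (cases "x i \<le> 1 / 2")
    case True
    then show ?thesis using left_half \<open>P x\<close> \<open>i < m\<close> \<open>t \<in> {0..1}\<close> by auto
  next
    case False
    then have "bw_score c m ((\<lambda>j. 1 - x j)(i := 1 - t)) i \<le> bw_score c m (\<lambda>j. 1 - x j) i"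
      using left_half[OF reflect[OF \<open>P x\<close>] \<open>i < m\<close>] \<open>t \<in> {0..1}\<close> by auto
    then show ?thesis by (simp only: bw_score_fun_upd_reflect bw_score_reflect)
  qed
qed

section \<open>Solving the equilibrium conditions\<close>

lemma two_cluster_conditions_solution:
  fixes c p r :: real
  assumes "0 \<le> c" "c < 1" "0 \<le> p" "p < r" "r \<le> 1"
    and gap: "(r - p) / 2 \<le> ((p + r) / 2 - c * (1 - (p + r) / 2)) / 2"
    and gap': "((1 - p) - (1 - r)) / 2 \<le> (((1 - r) + (1 - p)) / 2 - c * (1 - ((1 - r) + (1 - p)) / 2)) / 2"
    and flank: "0 < p \<Longrightarrow> p - c * (1 - (p + r) / 2) \<le> ((p + r) / 2 - c * (1 - (p + r) / 2)) / 2"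
    and flank': "0 < 1 - r \<Longrightarrow>
      (1 - r) - c * (1 - ((1 - r) + (1 - p)) / 2) \<le> (((1 - r) + (1 - p)) / 2 - c * (1 - ((1 - r) + (1 - p)) / 2)) / 2"
  shows "p = (1 + c) / 4 \<and> r = 1 - (1 + c) / 4"
proof -
  have G: "2*r - 2*p \<le> p + r - 2*c + c*p + c*r" using gap by (simp add: field_simps)
  have G': "2*r - 2*p \<le> 2 - p - r - c*p - c*r" using gap' by (simp add: field_simps)
  have "c * r < r" using assms(2-4) by (simp add: mult_less_cancel_right1)
  have "0 < p"
  proof (rule ccontr)
    assume "\<not> 0 < p"
    then have "p = 0" using assms(3) by simp
    with G \<open>c * r < r\<close> assms(1) show False by simp
  qed
  have "0 \<le> c * p" using assms(1,3) by simp
  have "0 < 1 - r"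
  proof (rule ccontr)
    assume "\<not> 0 < 1 - r"
    then have "r = 1" using assms(5) by simp
    with G' \<open>0 \<le> c * p\<close> assms(1,4) show False by simp
  qed
  have F: "4*p - 4*c + 2*c*p + 2*c*r \<le> p + r - 2*c + c*p + c*r"
    using flank[OF \<open>0 < p\<close>] by (simp add: field_simps)
  have F': "4 - 4*r - 2*c*p - 2*c*r \<le> 2 - r - p - c*r - c*p"
    using flank'[OF \<open>0 < 1 - r\<close>] by (simp add: field_simps)
  have "p + r + c*p + c*r = 1 + c" using G G' F F' by linarith
  then have "(p + r - 1) * (1 + c) = 0" by (simp add: algebra_simps)
  then have "p + r = 1" using assms(1) by simp
  then have "c * p + c * r = c" by (metis distrib_left mult_1_right)
  then have "4 * p = 1 + c" using G G' F F' \<open>p + r = 1\<close> by linarith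
  with \<open>p + r = 1\<close> show ?thesis by (simp add: field_simps)
qed

lemma three_two_split_absurd:
  fixes c p r :: real
  assumes "0 \<le> c" "c < 1" "0 \<le> p" "p < r"
    and gap: "(r - p) / 2 \<le> ((p + r) / 2 - c * (1 - (p + r) / 2)) / 3"
    and flank: "0 < p \<Longrightarrow> p - c * (1 - (p + r) / 2) \<le> ((p + r) / 2 - c * (1 - (p + r) / 2)) / 3"
  shows False
proof -
  have G: "3*r - 3*p \<le> p + r - 2*c + c*p + c*r" using gap by (simp add: field_simps)
  have "c * r < r" using assms(2-4) by (simp add: mult_less_cancel_right1)
  show False
  proof (cases "p = 0")
    case True
    with G \<open>c * r < r\<close> assms(1,4) show False by simp
  next
    case False
    then have "6*p - 6*c + 3*c*p + 3*c*r \<le> p + r - 2*c + c*p + c*r"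
      using flank assms(3) by (simp add: field_simps)
    with G \<open>p < r\<close> show False by linarith
  qed
qed

lemma three_cluster_conditions_solution:
  fixes c p q r :: real
  assumes "0 \<le> c" "0 \<le> p" "p < q" "q < r" "r \<le> 1"
    and gap_pq: "(q - p) / 2 \<le> ((p + q) / 2 - c * (1 - (p + r) / 2)) / 2"
    and gap_qr: "(r - q) / 2 \<le> ((p + q) / 2 - c * (1 - (p + r) / 2)) / 2"
    and flank: "0 < p \<Longrightarrow> p - c * (1 - (p + r) / 2) \<le> ((p + q) / 2 - c * (1 - (p + r) / 2)) / 2"
    and gap_qr': "((1 - q) - (1 - r)) / 2 \<le> (((1 - r) + (1 - q)) / 2 - c * (1 - ((1 - r) + (1 - p)) / 2)) / 2"
    and gap_pq': "((1 - p) - (1 - q)) / 2 \<le> (((1 - r) + (1 - q)) / 2 - c * (1 - ((1 - r) + (1 - p)) / 2)) / 2"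
    and flank': "0 < 1 - r \<Longrightarrow>
      (1 - r) - c * (1 - ((1 - r) + (1 - p)) / 2) \<le> (((1 - r) + (1 - q)) / 2 - c * (1 - ((1 - r) + (1 - p)) / 2)) / 2"
  shows "p = (1 + 2 * c) / 6 \<and> q = 1 / 2 \<and> r = 1 - (1 + 2 * c) / 6"
proof -
  have H1: "2*q - 2*p \<le> p + q - 2*c + c*p + c*r" using gap_pq by (simp add: field_simps)
  have H2: "2*r - 2*q \<le> p + q - 2*c + c*p + c*r" using gap_qr by (simp add: field_simps)
  have G1: "2*r - 2*q \<le> 2 - r - q - c*p - c*r" using gap_qr' by (simp add: field_simps)
  have G2: "2*q - 2*p \<le> 2 - r - q - c*p - c*r" using gap_pq' by (simp add: field_simps)
  have "0 \<le> c * p" using assms(1,2) by simp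
  have "c * r \<le> c" using assms(1,5) by (simp add: mult_left_le)
  have "0 < p"
  proof (rule ccontr)
    assume "\<not> 0 < p"
    then have "p = 0" using assms(2) by simp
    with H1 \<open>c * r \<le> c\<close> assms(1,3) show False by simp
  qed
  have "0 < 1 - r"
  proof (rule ccontr)
    assume "\<not> 0 < 1 - r"
    then have "r = 1" using assms(5) by simp
    with G1 \<open>0 \<le> c * p\<close> assms(1,4) show False by simp
  qed
  have H5: "4*p - 4*c + 2*c*p + 2*c*r \<le> p + q - 2*c + c*p + c*r"
    using flank[OF \<open>0 < p\<close>] by (simp add: field_simps)
  have G5: "4 - 4*r - 2*c*p - 2*c*r \<le> 2 - r - q - c*p - c*r"
    using flank'[OF \<open>0 < 1 - r\<close>] by (simp add: field_simps)
  have D: "3*r = 3*p + 2 - 2*c" using H1 G1 H5 G5 by linarith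
  have Q: "2*q = p + r" using H1 G1 H5 G5 H2 G2 by linarith
  have E5: "3*p - q - 2*c + c*p + c*r = 0" using H1 G1 H5 G5 by linarith
  have "c * (3*r) = c * (3*p + 2 - 2*c)" using D by simp
  then have Fcr: "3*(c*r) = 3*(c*p) + 2*c - 2*(c*c)" by (simp add: algebra_simps)
  have "(6*p - (1 + 2*c)) * (1 + c) = 6*p + 6*(c*p) - 1 - 3*c - 2*(c*c)" by (simp add: algebra_simps)
  also have "\<dots> = 0" using E5 Fcr D Q by linarith
  finally have "6*p = 1 + 2*c" using assms(1) by simp
  then show ?thesis using D Q by (simp add: field_simps)
qed

lemma no_three_two_cluster_equilibrium:
  assumes eq: "is_equilibrium c m x" and "0 \<le> c" "c < 1"
    and all: "\<forall>j<m. x j = p \<or> x j = r" and "p < r" and "count_at m x p = 3" and "\<exists>j<m. x j = r"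
  shows False
proof -
  have "2 \<le> count_at m x p" using \<open>count_at m x p = 3\<close> by simp
  note conditions = two_cluster_necessary[OF eq all \<open>p < r\<close> this \<open>\<exists>j<m. x j = r\<close>]
  obtain i where "i < m" "x i = p" using count_at_other_position[OF \<open>2 \<le> count_at m x p\<close>] by blast
  then have "0 \<le> p" using is_equilibrium_position[OF eq] by force
  show False
    by (rule three_two_split_absurd[OF assms(2,3) \<open>0 \<le> p\<close> \<open>p < r\<close>])
      (use conditions \<open>count_at m x p = 3\<close> in simp_all)
qed

lemma NCNE_four_candidates_imp_positions:
  assumes "is_NCNE c 4 x" "0 \<le> c" "c < 1"
  shows "count_at 4 x ((1 + c) / 4) = 2 \<and> count_at 4 x (1 - (1 + c) / 4) = 2"
proof -
  have eq: "is_equilibrium c 4 x" using assms(1) by (simp add: is_NCNE_def)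
  obtain A B where "A < B" "0 \<le> A" "B \<le> 1" and nA: "2 \<le> count_at 4 x A" and nB: "2 \<le> count_at 4 x B"
    using NCNE_extremes[OF assms(1,2)] by blast
  then have "count_at 4 x A = 2" "count_at 4 x B = 2"
    using count_at_partition[of A B 4 x] by linarith+
  then have "\<forall>j<4. x j \<in> {A, B}"
    using \<open>A < B\<close> by (intro all_positions_of_count_sum) auto
  then have all: "\<forall>j<4. x j = A \<or> x j = B" by simp
  have "\<exists>j<4. x j = A" "\<exists>j<4. x j = B"
    using count_at_other_position[OF nA] count_at_other_position[OF nB] by blast+
  note left = two_cluster_necessary[OF eq all \<open>A < B\<close> nA \<open>\<exists>j<4. x j = B\<close>]
  have "\<forall>j<4. 1 - x j = 1 - B \<or> 1 - x j = 1 - A" "1 - B < 1 - A"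
    "2 \<le> count_at 4 (\<lambda>j. 1 - x j) (1 - B)" "\<exists>j<4. 1 - x j = 1 - A"
    using all \<open>A < B\<close> nB \<open>\<exists>j<4. x j = A\<close> by (auto simp: count_at_reflect)
  note right = two_cluster_necessary[OF is_equilibrium_reflect[OF eq] this]
  have "A = (1 + c) / 4 \<and> B = 1 - (1 + c) / 4"
  proof (rule two_cluster_conditions_solution)
  qed (use left right \<open>A < B\<close> \<open>0 \<le> A\<close> \<open>B \<le> 1\<close> assms(2,3)
      \<open>count_at 4 x A = 2\<close> \<open>count_at 4 x B = 2\<close> in \<open>simp_all add: count_at_reflect\<close>)
  with \<open>count_at 4 x A = 2\<close> \<open>count_at 4 x B = 2\<close> show ?thesis by simp
qed

lemma no_profitable_deviation_four:
  assumes "0 \<le> c" "c < 1" and p: "p = (1 + c) / 4"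
    and counts: "count_at 4 y p = 2" "count_at 4 y (1 - p) = 2"
    and i: "i < 4" "y i = p" and "0 \<le> t" "t \<le> 1"
  shows "bw_score c 4 (y(i := t)) i \<le> bw_score c 4 y i"
proof -
  have "0 \<le> p" "p < 1 - p" using assms(1,2) by (simp_all add: p field_simps)
  have rivals: "rivals_at 4 y i p = 1" "rivals_at 4 y i (1 - p) = 2"
    using rivals_at_own_position[OF i(1), of y] rivals_at_other_position[of y i "1 - p" 4]
      counts i(2) \<open>p < 1 - p\<close> by auto
  have all: "\<forall>j<4. y j \<in> {p, 1 - p}"
    using \<open>p < 1 - p\<close> counts by (intro all_positions_of_count_sum) auto
  have "\<exists>j<4. j \<noteq> i \<and> y j = p" "\<exists>j<4. j \<noteq> i \<and> y j = 1 - p"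
    unfolding rivals_at_gt_0_iff[symmetric] rivals by simp_all
  then have others: "y ` ({..<4} - {i}) = {p, 1 - p}"
    by (intro others_image_eq[OF i(1)]) (use all in auto)
  have "bw_score c 4 y i = (1 - c) / 4"
    using bw_score_shared_leftmost[OF i(1) others, where a="1 - p" and B="1 - p" and c=c,
        unfolded i(2) counts(1)] \<open>0 \<le> p\<close> \<open>p < 1 - p\<close>
    by (simp add: p field_simps)
  moreover have "bw_score c 4 (y(i := t)) i \<le> (1 - c) / 4"
    using deviation_bound_two_positions[OF i(1) others, where V="(1 - c) / 4" and c=c and t=t,
        unfolded rivals] assms(1,2) \<open>0 \<le> p\<close> \<open>p < 1 - p\<close> \<open>0 \<le> t\<close> \<open>t \<le> 1\<close>
    by (simp add: p field_simps)
  ultimately show ?thesis by simp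
qed

lemma NCNE_four_candidates_of_positions:
  assumes "0 \<le> c" "c < 1" "count_at 4 x ((1 + c) / 4) = 2" "count_at 4 x (1 - (1 + c) / 4) = 2"
  shows "is_NCNE c 4 x"
proof -
  define p where "p = (1 + c) / 4"
  have "0 \<le> p" "p < 1 - p" using assms(1,2) by (simp_all add: p_def field_simps)
  define P where "P y \<longleftrightarrow> count_at 4 y p = 2 \<and> count_at 4 y (1 - p) = 2" for y
  have all: "\<forall>j<4. y j \<in> {p, 1 - p}" if "P y" for y
    using that \<open>p < 1 - p\<close> by (intro all_positions_of_count_sum) (auto simp: P_def)
  have "P x" using assms(3,4) by (simp add: P_def p_def)
  have "is_equilibrium c 4 x"
  proof (rule equilibrium_by_reflection[where P=P, OF \<open>P x\<close>])
    show "P (\<lambda>j. 1 - y j)" if "P y" for y using that by (simp add: P_def count_at_reflect)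
    show "is_profile 4 y" if "P y" for y
      using all[OF that] \<open>0 \<le> p\<close> \<open>p < 1 - p\<close> by (force simp: is_profile_def)
    fix y i and t :: real assume "P y" "i < 4" "y i \<le> 1 / 2" "0 \<le> t" "t \<le> 1"
    then have "y i = p" using all[OF \<open>P y\<close>] \<open>p < 1 - p\<close> by force
    moreover have "count_at 4 y p = 2" "count_at 4 y (1 - p) = 2" using \<open>P y\<close> by (simp_all add: P_def)
    ultimately show "bw_score c 4 (y(i := t)) i \<le> bw_score c 4 y i"
      using no_profitable_deviation_four[OF assms(1,2) p_def _ _ \<open>i < 4\<close> _ \<open>0 \<le> t\<close> \<open>t \<le> 1\<close>]
      by blast
  qed
  moreover have "\<exists>i<4. \<exists>j<4. x i \<noteq> x j"
  proof -
    have "0 < count_at 4 x p" "0 < count_at 4 x (1 - p)" using \<open>P x\<close> by (simp_all add: P_def)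
    then obtain i j where "i < 4" "x i = p" "j < 4" "x j = 1 - p"
      unfolding count_at_gt_0_iff by blast
    then show ?thesis using \<open>p < 1 - p\<close> by force
  qed
  ultimately show ?thesis by (simp add: is_NCNE_def)
qed

lemma five_positions_split:
  assumes "A < B" and range: "\<forall>j<5. A \<le> x j \<and> x j \<le> B"
    and nA: "2 \<le> count_at 5 x A" and nB: "2 \<le> count_at 5 x B"
  obtains (split_3_2) "\<forall>j<5. x j = A \<or> x j = B" "count_at 5 x A = 3 \<or> count_at 5 x B = 3"
    | (split_2_1_2) q where "A < q" "q < B" "\<forall>j<5. x j = A \<or> x j = q \<or> x j = B"
      "count_at 5 x A = 2" "count_at 5 x q = 1" "count_at 5 x B = 2"
proof -
  define R where "R = {j. j < 5 \<and> x j \<noteq> A \<and> x j \<noteq> B}"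
  have partition: "count_at 5 x A + count_at 5 x B + card R = 5"
    using count_at_partition[of A B 5 x] \<open>A < B\<close> by (simp add: R_def)
  consider "card R = 0" | "card R = 1" using partition nA nB by linarith
  then show ?thesis
  proof cases
    case 1
    then have "\<forall>j<5. x j = A \<or> x j = B" by (auto simp: R_def)
    moreover have "count_at 5 x A = 3 \<or> count_at 5 x B = 3" using partition 1 nA nB by linarith
    ultimately show ?thesis by (rule split_3_2)
  next
    case 2
    then obtain k where "R = {k}" by (rule card_1_singletonE)
    then have "k < 5" "A < x k" "x k < B"
      using range by (auto simp: R_def order.order_iff_strict)
    have middle: "j = k" if "j < 5" "x j \<noteq> A" "x j \<noteq> B" for j
    proof -
      have "j \<in> R" using that by (simp add: R_def)
      with \<open>R = {k}\<close> show ?thesis by simp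
    qed
    then have "\<forall>j<5. x j = A \<or> x j = x k \<or> x j = B" by blast
    moreover have "{j. j < 5 \<and> x j = x k} = R"
    proof (intro set_eqI iffI)
      fix j assume "j \<in> {j. j < 5 \<and> x j = x k}"
      then show "j \<in> R" using middle[of j] \<open>A < x k\<close> \<open>x k < B\<close> \<open>R = {k}\<close> by simp
    qed (use \<open>k < 5\<close> \<open>R = {k}\<close> in simp)
    then have "count_at 5 x (x k) = card R" by simp
    then have "count_at 5 x (x k) = 1" "count_at 5 x A = 2" "count_at 5 x B = 2"
      using 2 partition nA nB by linarith+
    ultimately show ?thesis using \<open>A < x k\<close> \<open>x k < B\<close> by (intro split_2_1_2)
  qed
qed

lemma NCNE_five_candidates_imp_positions:
  assumes "is_NCNE c 5 x" "0 \<le> c" "c < 1"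
  shows "count_at 5 x ((1 + 2 * c) / 6) = 2 \<and> count_at 5 x (1 / 2) = 1 \<and>
    count_at 5 x (1 - (1 + 2 * c) / 6) = 2"
proof -
  have eq: "is_equilibrium c 5 x" using assms(1) by (simp add: is_NCNE_def)
  have eq': "is_equilibrium c 5 (\<lambda>j. 1 - x j)" using is_equilibrium_reflect[OF eq] .
  obtain A B where "A < B" "0 \<le> A" "B \<le> 1" and range: "\<forall>j<5. A \<le> x j \<and> x j \<le> B"
    and nA: "2 \<le> count_at 5 x A" and nB: "2 \<le> count_at 5 x B"
    using NCNE_extremes[OF assms(1,2)] by blast
  have "\<exists>j<5. x j = A" "\<exists>j<5. x j = B"
    using count_at_other_position[OF nA] count_at_other_position[OF nB] by blast+
  from \<open>A < B\<close> range nA nB show ?thesis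
  proof (cases rule: five_positions_split)
    case split_3_2
    then show ?thesis
      using no_three_two_cluster_equilibrium[OF eq assms(2,3) split_3_2(1) \<open>A < B\<close>]
        no_three_two_cluster_equilibrium[OF eq' assms(2,3), where p="1 - B" and r="1 - A"]
        \<open>A < B\<close> \<open>\<exists>j<5. x j = A\<close> \<open>\<exists>j<5. x j = B\<close> by (auto simp: count_at_reflect)
  next
    case (split_2_1_2 q)
    then have "\<exists>j<5. x j = q" by (auto simp flip: count_at_gt_0_iff)
    note left = three_cluster_necessary[OF eq split_2_1_2(3,1,2) nA this \<open>\<exists>j<5. x j = B\<close>]
    have "\<forall>j<5. 1 - x j = 1 - B \<or> 1 - x j = 1 - q \<or> 1 - x j = 1 - A" "1 - B < 1 - q" "1 - q < 1 - A"
      "2 \<le> count_at 5 (\<lambda>j. 1 - x j) (1 - B)" "\<exists>j<5. 1 - x j = 1 - q" "\<exists>j<5. 1 - x j = 1 - A"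
      using split_2_1_2 nB \<open>\<exists>j<5. x j = q\<close> \<open>\<exists>j<5. x j = A\<close> by (auto simp: count_at_reflect)
    note right = three_cluster_necessary[OF eq' this]
    have "A = (1 + 2 * c) / 6 \<and> q = 1 / 2 \<and> B = 1 - (1 + 2 * c) / 6"
    proof (rule three_cluster_conditions_solution)
    qed (use left right split_2_1_2 \<open>0 \<le> A\<close> \<open>B \<le> 1\<close> assms(2) in \<open>simp_all add: count_at_reflect\<close>)
    with split_2_1_2 show ?thesis by simp
  qed
qed

lemma no_profitable_deviation_outer_five:
  assumes "0 \<le> c" "c < 1" and p: "p = (1 + 2 * c) / 6"
    and counts: "count_at 5 y p = 2" "count_at 5 y (1 / 2) = 1" "count_at 5 y (1 - p) = 2"
    and i: "i < 5" "y i = p" and "0 \<le> t" "t \<le> 1"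
  shows "bw_score c 5 (y(i := t)) i \<le> bw_score c 5 y i"
proof -
  have "0 \<le> p" "p < 1 / 2" "1 / 2 < 1 - p" using assms(1,2) by (simp_all add: p field_simps)
  have all: "\<forall>j<5. y j \<in> {p, 1 / 2, 1 - p}"
    using \<open>p < 1 / 2\<close> \<open>1 / 2 < 1 - p\<close> counts by (intro all_positions_of_count_sum) auto
  have "y i \<noteq> 1 / 2" "y i \<noteq> 1 - p" using i(2) \<open>p < 1 / 2\<close> \<open>1 / 2 < 1 - p\<close> by auto
  have rivals: "rivals_at 5 y i p = 1" "rivals_at 5 y i (1 / 2) = 1" "rivals_at 5 y i (1 - p) = 2"
  proof -
    show "rivals_at 5 y i p = 1" using rivals_at_own_position[OF i(1), of y] counts(1) i(2) by simp
    show "rivals_at 5 y i (1 / 2) = 1" "rivals_at 5 y i (1 - p) = 2"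
      by (simp_all only: rivals_at_other_position[of y i "1 / 2" 5, OF \<open>y i \<noteq> 1 / 2\<close>]
          rivals_at_other_position[of y i "1 - p" 5, OF \<open>y i \<noteq> 1 - p\<close>] counts)
  qed
  have "\<exists>j<5. j \<noteq> i \<and> y j = p" "\<exists>j<5. j \<noteq> i \<and> y j = 1 / 2" "\<exists>j<5. j \<noteq> i \<and> y j = 1 - p"
    unfolding rivals_at_gt_0_iff[symmetric] rivals by simp_all
  then have others: "y ` ({..<5} - {i}) = {p, 1 / 2, 1 - p}"
    by (intro others_image_eq[OF i(1)]) (use all in auto)
  have "bw_score c 5 y i = (1 - c) / 6"
    using bw_score_shared_leftmost[OF i(1) others, where a="1 / 2" and B="1 - p" and c=c,
        unfolded i(2) counts(1)] \<open>0 \<le> p\<close> \<open>p < 1 / 2\<close> \<open>1 / 2 < 1 - p\<close>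
    by (simp add: p field_simps)
  moreover have "bw_score c 5 (y(i := t)) i \<le> (1 - c) / 6"
    using deviation_bound_three_positions[OF i(1) others, where V="(1 - c) / 6" and c=c and t=t,
        unfolded rivals] assms(1,2) \<open>0 \<le> p\<close> \<open>p < 1 / 2\<close> \<open>1 / 2 < 1 - p\<close> \<open>0 \<le> t\<close> \<open>t \<le> 1\<close>
    by (simp add: p field_simps)
  ultimately show ?thesis by simp
qed

lemma no_profitable_deviation_centre_five:
  assumes "0 \<le> c" "c < 1" and p: "p = (1 + 2 * c) / 6"
    and counts: "count_at 5 y p = 2" "count_at 5 y (1 / 2) = 1" "count_at 5 y (1 - p) = 2"
    and i: "i < 5" "y i = 1 / 2" and "0 \<le> t" "t \<le> 1"
  shows "bw_score c 5 (y(i := t)) i \<le> bw_score c 5 y i"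
proof -
  have "0 \<le> p" "p < 1 / 2" "1 / 2 < 1 - p" using assms(1,2) by (simp_all add: p field_simps)
  have all: "\<forall>j<5. y j \<in> {p, 1 / 2, 1 - p}"
    using \<open>p < 1 / 2\<close> \<open>1 / 2 < 1 - p\<close> counts by (intro all_positions_of_count_sum) auto
  have "rivals_at 5 y i (1 / 2) = 0"
    using rivals_at_own_position[OF i(1), of y] counts(2) i(2) by simp
  then have "\<forall>j<5. j \<noteq> i \<longrightarrow> y j \<in> {p, 1 - p}" using all by (auto simp: card_eq_0_iff)
  moreover have rivals: "rivals_at 5 y i p = 2" "rivals_at 5 y i (1 - p) = 2"
    using rivals_at_other_position[of y i _ 5] counts i(2) \<open>p < 1 / 2\<close> \<open>1 / 2 < 1 - p\<close> by auto
  moreover have "\<exists>j<5. j \<noteq> i \<and> y j = p" "\<exists>j<5. j \<noteq> i \<and> y j = 1 - p"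
    unfolding rivals_at_gt_0_iff[symmetric] rivals by simp_all
  ultimately have others: "y ` ({..<5} - {i}) = {p, 1 - p}"
    by (intro others_image_eq[OF i(1)]) auto
  have "bw_score c 5 (y(i := 1 / 2)) i = (1 - p - p) / 2"
    using \<open>0 \<le> p\<close> \<open>p < 1 / 2\<close> \<open>1 / 2 < 1 - p\<close>
    by (intro bw_score_in_gap[OF i(1) others]) auto
  moreover have "y(i := 1 / 2) = y" using i(2) by auto
  ultimately have "bw_score c 5 y i = (1 - c) / 3" by (simp add: p field_simps)
  moreover have "bw_score c 5 (y(i := t)) i \<le> (1 - c) / 3"
    using deviation_bound_two_positions[OF i(1) others, where V="(1 - c) / 3" and c=c and t=t,
        unfolded rivals] assms(1,2) \<open>0 \<le> p\<close> \<open>p < 1 / 2\<close> \<open>1 / 2 < 1 - p\<close> \<open>0 \<le> t\<close> \<open>t \<le> 1\<close>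
    by (simp add: p field_simps)
  ultimately show ?thesis by simp
qed

lemma NCNE_five_candidates_of_positions:
  assumes "0 \<le> c" "c < 1" "count_at 5 x ((1 + 2 * c) / 6) = 2" "count_at 5 x (1 / 2) = 1"
    "count_at 5 x (1 - (1 + 2 * c) / 6) = 2"
  shows "is_NCNE c 5 x"
proof -
  define p where "p = (1 + 2 * c) / 6"
  have "0 \<le> p" "p < 1 / 2" "1 / 2 < 1 - p" using assms(1,2) by (simp_all add: p_def field_simps)
  define P where "P y \<longleftrightarrow> count_at 5 y p = 2 \<and> count_at 5 y (1 / 2) = 1 \<and> count_at 5 y (1 - p) = 2"
    for y
  have all: "\<forall>j<5. y j \<in> {p, 1 / 2, 1 - p}" if "P y" for y
    using that \<open>p < 1 / 2\<close> \<open>1 / 2 < 1 - p\<close> by (intro all_positions_of_count_sum) (auto simp: P_def)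
  have "P x" using assms(3-5) by (simp add: P_def p_def)
  have "is_equilibrium c 5 x"
  proof (rule equilibrium_by_reflection[where P=P, OF \<open>P x\<close>])
    show "P (\<lambda>j. 1 - y j)" if "P y" for y using that by (simp add: P_def count_at_reflect)
    show "is_profile 5 y" if "P y" for y
      using all[OF that] \<open>0 \<le> p\<close> \<open>p < 1 / 2\<close> \<open>1 / 2 < 1 - p\<close> by (force simp: is_profile_def)
    fix y i and t :: real assume "P y" "i < 5" "y i \<le> 1 / 2" "0 \<le> t" "t \<le> 1"
    then have "y i = p \<or> y i = 1 / 2" using all[OF \<open>P y\<close>] \<open>1 / 2 < 1 - p\<close> by force
    moreover have "count_at 5 y p = 2" "count_at 5 y (1 / 2) = 1" "count_at 5 y (1 - p) = 2"
      using \<open>P y\<close> by (simp_all add: P_def)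
    ultimately show "bw_score c 5 (y(i := t)) i \<le> bw_score c 5 y i"
      using no_profitable_deviation_outer_five[OF assms(1,2) p_def _ _ _ \<open>i < 5\<close> _ \<open>0 \<le> t\<close> \<open>t \<le> 1\<close>]
        no_profitable_deviation_centre_five[OF assms(1,2) p_def _ _ _ \<open>i < 5\<close> _ \<open>0 \<le> t\<close> \<open>t \<le> 1\<close>]
      by blast
  qed
  moreover have "\<exists>i<5. \<exists>j<5. x i \<noteq> x j"
  proof -
    have "0 < count_at 5 x p" "0 < count_at 5 x (1 / 2)" using \<open>P x\<close> by (simp_all add: P_def)
    then obtain i j where "i < 5" "x i = p" "j < 5" "x j = 1 / 2"
      unfolding count_at_gt_0_iff by blast
    then show ?thesis using \<open>p < 1 / 2\<close> by force
  qed
  ultimately show ?thesis by (simp add: is_NCNE_def)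
qed

theorem corollary3:
  fixes c :: real
  assumes "0 \<le> c" and "c < 1"
  shows "(\<forall>x. is_NCNE c 4 x \<longleftrightarrow>
            (card {i. i < 4 \<and> x i = (1 + c) / 4} = 2 \<and>
             card {i. i < 4 \<and> x i = 1 - (1 + c) / 4} = 2))
       \<and> (\<forall>x. is_NCNE c 5 x \<longleftrightarrow>
            (card {i. i < 5 \<and> x i = (1 + 2 * c) / 6} = 2 \<and>
             card {i. i < 5 \<and> x i = 1 / 2} = 1 \<and>
             card {i. i < 5 \<and> x i = 1 - (1 + 2 * c) / 6} = 2))"
  using NCNE_four_candidates_imp_positions[OF _ assms] NCNE_four_candidates_of_positions[OF assms]
    NCNE_five_candidates_imp_positions[OF _ assms] NCNE_five_candidates_of_positions[OF assms]
  by blast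

end
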